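(* Let $G$ be a connected undirected graph with positive edge weights, weighted adjacency matrix $\mathbf{A}$, diagonal degree matrix $\mathbf{D}$ and Laplacian $\mathbf{L}=\mathbf{D}-\mathbf{A}$. Let $\mathbf{\Pi}=\mathbf{I}-\frac{1}{n}\mathbf{1}\mathbf{1}^\top$ and $\pi=\frac{\mathbf{D}\mathbf{1}}{\mathbf{1}^\top\mathbf{D}\mathbf{1}}$. Then for every vertex $u$, $$\mathbf{L}^+(\mathbf{1_u}-\pi)=\frac12\,\mathbf{\Pi}\mathbf{D}^{-1}\sum_{t=0}^{\infty}\left(\left(\tfrac12\mathbf{I}+\tfrac12\mathbf{A}\mathbf{D}^{-1}\right)^t\mathbf{1_u}-\pi\right).$$
   Context: $\mathbf{L}^+$ denotes the Moore–Penrose pseudoinverse, $\mathbf{1}$ the all-ones vector, $\mathbf{1_u}$ the indicator vector of vertex $u$, and $n$ the number of vertices. *)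

theory Defs
  imports "HOL-Analysis.Analysis"
begin

primrec matpow :: "'a::comm_ring_1 ^ 'n ^ 'n \<Rightarrow> nat \<Rightarrow> 'a ^ 'n ^ 'n" where
  "matpow M 0 = mat 1"
| "matpow M (Suc k) = M ** matpow M k"

definition pinv :: "real ^ 'n ^ 'n \<Rightarrow> real ^ 'n ^ 'n" where
  "pinv A = (THE X. A ** X ** A = A \<and> X ** A ** X = X \<and>
                    transpose (A ** X) = A ** X \<and> transpose (X ** A) = X ** A)"

text \<open>Weighted undirected graph on the vertex type 'n given by its weighted adjacency matrix:
  symmetric, nonnegative weights (edge iff weight positive), no self-loops.\<close>
definition weighted_graph :: "real ^ 'n ^ 'n \<Rightarrow> bool" where
  "weighted_graph A \<longleftrightarrow> (\<forall>i j. A $ i $ j = A $ j $ i) \<and> (\<forall>i j. A $ i $ j \<ge> 0) \<and> (\<forall>i. A $ i $ i = 0)"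

definition graph_connected :: "real ^ 'n ^ 'n \<Rightarrow> bool" where
  "graph_connected A \<longleftrightarrow> (\<forall>u v. (u, v) \<in> {(i, j). A $ i $ j > 0}\<^sup>*)"

definition degree_matrix :: "real ^ 'n ^ 'n \<Rightarrow> real ^ 'n ^ 'n" where
  "degree_matrix A = (\<chi> i j. if i = j then (\<Sum>k\<in>UNIV. A $ i $ k) else 0)"

definition laplacian :: "real ^ 'n ^ 'n \<Rightarrow> real ^ 'n ^ 'n" where
  "laplacian A = degree_matrix A - A"

definition ones :: "real ^ 'n" where "ones = (\<chi> i. 1)"

definition indic :: "'n \<Rightarrow> real ^ 'n" where "indic u = (\<chi> i. if i = u then 1 else 0)"

definition centering :: "real ^ 'n ^ 'n" where
  "centering = mat 1 - (1 / real CARD('n)) *\<^sub>R (\<chi> i j. 1)"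

definition stationary :: "real ^ 'n ^ 'n \<Rightarrow> real ^ 'n" where
  "stationary A = (1 / (ones \<bullet> (degree_matrix A *v ones))) *\<^sub>R (degree_matrix A *v ones)"

definition lazy_walk :: "real ^ 'n ^ 'n \<Rightarrow> real ^ 'n ^ 'n" where
  "lazy_walk A = (1/2) *\<^sub>R mat 1 + (1/2) *\<^sub>R (A ** matrix_inv (degree_matrix A))"

end

theory Submission
  imports Defs
begin

text \<open>The lazy walk \<open>W = I/2 + A D\<^sup>-\<^sup>1/2\<close> is column stochastic with positive diagonal,
  so connectivity makes some power \<open>W\<^sup>K\<close> entrywise positive, and by Dobrushin's bound
  \<open>W\<^sup>K\<close> contracts the \<open>\<ell>\<^sub>1\<close> norm of zero-sum vectors. As \<open>\<pi>\<close> is \<open>W\<close>-stationary,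
  the terms \<open>W\<^sup>t 1\<^sub>u - \<pi> = W\<^sup>t (1\<^sub>u - \<pi>)\<close> decay geometrically, and their sum \<open>S\<close>
  satisfies \<open>W S = S - (1\<^sub>u - \<pi>)\<close>. Since \<open>L D\<^sup>-\<^sup>1 = 2 (I - W)\<close>, the vector
  \<open>y = D\<^sup>-\<^sup>1 S / 2\<close> solves \<open>L y = 1\<^sub>u - \<pi>\<close>, so \<open>L\<^sup>+ (1\<^sub>u - \<pi>) = L\<^sup>+ L y = \<Pi> y\<close>:
  the kernel of the Laplacian of a connected graph consists of the constant vectors,
  hence \<open>L\<^sup>+ L = \<Pi>\<close>.\<close>

lemma matrix_inv_eqI:
  fixes X :: "'a::semiring_1 ^ 'n ^ 'm" and Y :: "'a ^ 'm ^ 'n"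
  assumes "X ** Y = mat 1" "Y ** X = mat 1"
  shows "matrix_inv X = Y"
proof -
  have inv: "X ** matrix_inv X = mat 1 \<and> matrix_inv X ** X = mat 1"
    unfolding matrix_inv_def by (rule someI[where x = Y]) (use assms in blast)
  have "matrix_inv X = matrix_inv X ** (X ** Y)"
    using assms by simp
  also have "\<dots> = Y"
    using inv by (simp add: matrix_mul_assoc)
  finally show ?thesis .
qed

lemma matrix_diff_ldistrib: "(X::'a::ring_1 ^ 'n ^ 'm) ** (Y - Z) = X ** Y - X ** Z"
  by (simp add: vec_eq_iff matrix_matrix_mult_def algebra_simps sum_subtractf)

lemma matrix_diff_rdistrib: "((X::'a::ring_1 ^ 'n ^ 'm) - Y) ** Z = X ** Z - Y ** Z"
  by (simp add: vec_eq_iff matrix_matrix_mult_def algebra_simps sum_subtractf)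

lemma matrix_add_rdistrib: "((X::'a::semiring_1 ^ 'n ^ 'm) + Y) ** Z = X ** Z + Y ** Z"
  by (simp add: vec_eq_iff matrix_matrix_mult_def algebra_simps sum.distrib)

lemma transpose_diff: "transpose ((X::'a::ab_group_add ^ 'n ^ 'm) - Y) = transpose X - transpose Y"
  by (simp add: vec_eq_iff transpose_def)

lemma matpow_add: "matpow M (a + b) = matpow M a ** matpow M b"
  by (induction a) (simp_all add: matrix_mul_assoc)

definition diag_matrix :: "('n \<Rightarrow> 'a::zero) \<Rightarrow> 'a ^ 'n ^ 'n" where
  "diag_matrix f = (\<chi> i j. if i = j then f i else 0)"

lemma matrix_mult_diag_matrix:
  "M ** diag_matrix f = (\<chi> i j. M $ i $ j * (f j :: 'a::semiring_1))"
proof -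
  have "(\<Sum>k\<in>UNIV. M $ i $ k * (if k = j then f k else 0)) = M $ i $ j * f j" for i j
    by (simp add: if_distrib [of "(*) _"] cong: if_cong)
  then show ?thesis
    by (simp add: vec_eq_iff matrix_matrix_mult_def diag_matrix_def)
qed

lemma diag_matrix_mult: "diag_matrix f ** diag_matrix g = diag_matrix (\<lambda>i. f i * g i :: 'a::semiring_1)"
  by (simp add: matrix_mult_diag_matrix) (simp add: diag_matrix_def vec_eq_iff)

lemma diag_matrix_1: "diag_matrix (\<lambda>_. 1) = mat 1"
  by (simp add: diag_matrix_def mat_def)

lemma diag_matrix_mult_vector: "(diag_matrix f *v v) $ i = f i * (v $ i :: 'a::semiring_1)"
  by (simp add: diag_matrix_def matrix_vector_mult_def if_distrib [of "\<lambda>x. x * _"] cong: if_cong)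

lemma matrix_inv_diag_matrix:
  assumes "\<And>i. f i \<noteq> (0::'a::field)"
  shows "matrix_inv (diag_matrix f) = diag_matrix (\<lambda>i. inverse (f i))"
  using assms by (intro matrix_inv_eqI) (simp_all add: diag_matrix_mult diag_matrix_1)

definition penrose_conditions :: "real ^ 'n ^ 'n \<Rightarrow> real ^ 'n ^ 'n \<Rightarrow> bool" where
  "penrose_conditions M X \<longleftrightarrow> M ** X ** M = M \<and> X ** M ** X = X \<and>
     transpose (M ** X) = M ** X \<and> transpose (X ** M) = X ** M"

lemma penrose_conditions_unique:
  assumes X: "penrose_conditions M X" and Y: "penrose_conditions M Y"
  shows "X = Y"
proof -
  have x1: "M ** X ** M = M" and x2: "X ** M ** X = X"
    and x3: "transpose (M ** X) = M ** X" and x4: "transpose (X ** M) = X ** M"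
    using X by (auto simp: penrose_conditions_def)
  have y1: "M ** Y ** M = M" and y2: "Y ** M ** Y = Y"
    and y3: "transpose (M ** Y) = M ** Y" and y4: "transpose (Y ** M) = Y ** M"
    using Y by (auto simp: penrose_conditions_def)
  have MX: "M ** X = M ** Y"
  proof -
    have "M ** X = transpose ((M ** Y) ** (M ** X))"
      using x3 y1 by (simp add: matrix_mul_assoc)
    also have "\<dots> = M ** X ** (M ** Y)"
      using x3 y3 by (simp add: matrix_transpose_mul)
    also have "\<dots> = M ** Y"
      using x1 by (simp add: matrix_mul_assoc)
    finally show ?thesis .
  qed
  have XM: "X ** M = Y ** M"
  proof -
    have "X ** M = transpose ((X ** M) ** (Y ** M))"
      using x4 y1 by (metis matrix_mul_assoc)
    also have "\<dots> = Y ** M ** (X ** M)"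
      using x4 y4 by (simp add: matrix_transpose_mul)
    also have "\<dots> = Y ** M"
      using x1 by (metis matrix_mul_assoc)
    finally show ?thesis .
  qed
  have "X = Y ** M ** X"
    using x2 XM by simp
  also have "\<dots> = Y"
    using MX y2 by (simp flip: matrix_mul_assoc)
  finally show ?thesis .
qed

lemma pinv_eqI: "penrose_conditions M X \<Longrightarrow> pinv M = X"
  unfolding pinv_def
  by (rule the_equality) (auto simp: penrose_conditions_def intro: penrose_conditions_unique)

lemma pinv_mult_eq_complementary_projection:
  fixes L P :: "real ^ 'n ^ 'n"
  assumes LP: "L ** P = 0" and PL: "P ** L = 0" and PP: "P ** P = P" and tP: "transpose P = P"
    and inj: "\<And>v. (L + P) *v v = 0 \<Longrightarrow> v = 0"
  shows "pinv L ** L = mat 1 - P"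
proof -
  obtain B where BM: "B ** (L + P) = mat 1"
    using inj matrix_left_invertible_ker[of "L + P"] by blast
  then have MB: "(L + P) ** B = mat 1"
    using matrix_left_right_inverse by blast
  have BP: "B ** P = P"
    using arg_cong[OF BM, of "\<lambda>X. X ** P"] LP PP
    by (simp add: matrix_add_ldistrib matrix_add_rdistrib flip: matrix_mul_assoc)
  have PB: "P ** B = P"
    using arg_cong[OF MB, of "\<lambda>X. P ** X"] PL PP
    by (simp add: matrix_add_ldistrib matrix_add_rdistrib matrix_mul_assoc)
  have LX: "L ** (B - P) = mat 1 - P"
    using LP MB PB by (simp add: matrix_diff_ldistrib matrix_add_rdistrib eq_diff_eq)
  have XL: "(B - P) ** L = mat 1 - P"
    using PL BM BP by (simp add: matrix_diff_rdistrib matrix_add_ldistrib eq_diff_eq)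
  have "penrose_conditions L (B - P)"
    using LX XL PL PB PP tP
    by (simp add: penrose_conditions_def matrix_diff_ldistrib matrix_diff_rdistrib transpose_diff)
  then show ?thesis
    using XL pinv_eqI by metis
qed

definition l1_norm :: "real ^ 'n \<Rightarrow> real" where
  "l1_norm x = (\<Sum>i\<in>UNIV. \<bar>x $ i\<bar>)"

lemma l1_norm_nonneg: "0 \<le> l1_norm x"
  by (simp add: l1_norm_def sum_nonneg)

definition column_stochastic :: "real ^ 'n ^ 'n \<Rightarrow> bool" where
  "column_stochastic M \<longleftrightarrow> (\<forall>i j. 0 \<le> M $ i $ j) \<and> (\<forall>j. (\<Sum>i\<in>UNIV. M $ i $ j) = 1)"

lemma column_stochastic_mat_1: "column_stochastic (mat 1)"
  by (simp add: column_stochastic_def mat_def)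

lemma column_stochastic_mult:
  assumes "column_stochastic M" "column_stochastic N"
  shows "column_stochastic (M ** N)"
proof -
  have "(\<Sum>i\<in>UNIV. (M ** N) $ i $ j) = (\<Sum>k\<in>UNIV. (\<Sum>i\<in>UNIV. M $ i $ k) * N $ k $ j)" for j
    by (simp add: matrix_matrix_mult_def sum_distrib_right) (rule sum.swap)
  with assms show ?thesis
    by (auto simp: column_stochastic_def matrix_matrix_mult_def intro: sum_nonneg)
qed

lemma column_stochastic_matpow: "column_stochastic M \<Longrightarrow> column_stochastic (matpow M t)"
  by (induction t) (simp_all add: column_stochastic_mult column_stochastic_mat_1)

lemma column_stochastic_sum_preserving:
  assumes "column_stochastic M"
  shows "(\<Sum>i\<in>UNIV. (M *v x) $ i) = (\<Sum>i\<in>UNIV. x $ i)"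
proof -
  have "(\<Sum>i\<in>UNIV. (M *v x) $ i) = (\<Sum>j\<in>UNIV. (\<Sum>i\<in>UNIV. M $ i $ j) * x $ j)"
    by (simp add: matrix_vector_mult_def sum_distrib_right) (rule sum.swap)
  with assms show ?thesis
    by (simp add: column_stochastic_def)
qed

text \<open>Dobrushin's bound: subtracting \<open>\<delta>\<close> from every entry of \<open>M\<close> does not change \<open>M *v x\<close>
  and leaves a nonnegative matrix with column sums \<open>1 - n \<delta>\<close>. The case \<open>\<delta> = 0\<close> is
  non-expansiveness on arbitrary vectors.\<close>
lemma l1_norm_column_stochastic_contraction:
  fixes M :: "real ^ 'n ^ 'n"
  assumes M: "column_stochastic M" and \<delta>: "\<And>i j. \<delta> \<le> M $ i $ j"
    and x: "\<delta> * (\<Sum>i\<in>UNIV. x $ i) = 0"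
  shows "l1_norm (M *v x) \<le> (1 - real CARD('n) * \<delta>) * l1_norm x"
proof -
  have shifted: "(M *v x) $ i = (\<Sum>j\<in>UNIV. (M $ i $ j - \<delta>) * x $ j)" for i
    using x by (simp add: matrix_vector_mult_def left_diff_distrib sum_subtractf sum_distrib_left)
  have "l1_norm (M *v x) \<le> (\<Sum>i\<in>UNIV. \<Sum>j\<in>UNIV. (M $ i $ j - \<delta>) * \<bar>x $ j\<bar>)"
    unfolding l1_norm_def shifted
  proof (intro sum_mono order.trans[OF sum_abs] eq_refl sum.cong refl)
    show "\<bar>(M $ i $ j - \<delta>) * x $ j\<bar> = (M $ i $ j - \<delta>) * \<bar>x $ j\<bar>" for i j
      using \<delta>[of i j] by (simp add: abs_mult)
  qed
  also have "\<dots> = (\<Sum>j\<in>UNIV. (\<Sum>i\<in>UNIV. M $ i $ j - \<delta>) * \<bar>x $ j\<bar>)"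
    by (simp add: sum_distrib_right) (rule sum.swap)
  also have "\<dots> = (1 - real CARD('n) * \<delta>) * l1_norm x"
    using M by (simp add: column_stochastic_def sum_subtractf l1_norm_def sum_distrib_left)
  finally show ?thesis .
qed

lemma l1_norm_column_stochastic_le: "column_stochastic M \<Longrightarrow> l1_norm (M *v x) \<le> l1_norm x"
  using l1_norm_column_stochastic_contraction[of M 0 x] by (simp add: column_stochastic_def)

lemma positive_column_stochastic_contracts:
  fixes Q :: "real ^ 'n ^ 'n"
  assumes Q: "column_stochastic Q" and pos: "\<And>i j. 0 < Q $ i $ j"
  obtains c where "0 < c" "c < 1"
    "\<And>x. (\<Sum>i\<in>UNIV. x $ i) = 0 \<Longrightarrow> l1_norm (Q *v x) \<le> c * l1_norm x"
proof
  define \<delta> where "\<delta> = Min (range (\<lambda>(i, j). Q $ i $ j))"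
  have "0 < \<delta>"
    unfolding \<delta>_def using pos by (subst Min_gr_iff) auto
  have \<delta>_le: "\<delta> \<le> Q $ i $ j" for i j
    unfolding \<delta>_def by (rule Min_le) (auto intro!: image_eqI[where x = "(i, j)"])
  \<comment> \<open>\<open>1 - n \<delta>\<close> may vanish; the maximum keeps the rate positive\<close>
  define c where "c = max (1 - real CARD('n) * \<delta>) (1/2)"
  show "0 < c" "c < 1"
    unfolding c_def using \<open>0 < \<delta>\<close> by auto
  show "l1_norm (Q *v x) \<le> c * l1_norm x" if "(\<Sum>i\<in>UNIV. x $ i) = 0" for x
  proof -
    have "l1_norm (Q *v x) \<le> (1 - real CARD('n) * \<delta>) * l1_norm x"
      using that by (intro l1_norm_column_stochastic_contraction Q \<delta>_le) simp
    also have "\<dots> \<le> c * l1_norm x"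
      unfolding c_def by (intro mult_right_mono l1_norm_nonneg) simp
    finally show ?thesis .
  qed
qed

lemma l1_norm_matpow_geometric_decay:
  assumes M: "column_stochastic M" and "0 \<le> c"
    and contr: "\<And>y. (\<Sum>i\<in>UNIV. y $ i) = 0 \<Longrightarrow> l1_norm (matpow M K *v y) \<le> c * l1_norm y"
    and x: "(\<Sum>i\<in>UNIV. x $ i) = 0"
  shows "l1_norm (matpow M (K * q + r) *v x) \<le> c ^ q * l1_norm x"
proof (induction q)
  case 0
  show ?case
    using l1_norm_column_stochastic_le[OF column_stochastic_matpow[OF M]] by simp
next
  case (Suc q)
  let ?y = "matpow M (K * q + r) *v x"
  have "(\<Sum>i\<in>UNIV. ?y $ i) = 0"
    using x column_stochastic_sum_preserving[OF column_stochastic_matpow[OF M]] by simp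
  then have "l1_norm (matpow M K *v ?y) \<le> c * l1_norm ?y"
    by (rule contr)
  also have "\<dots> \<le> c * (c ^ q * l1_norm x)"
    using Suc \<open>0 \<le> c\<close> by (rule mult_left_mono)
  finally show ?case
    by (simp add: matpow_add[of M K "K * q + r", simplified] matrix_vector_mul_assoc add.assoc)
qed

lemma summable_matpow_orbit:
  assumes M: "column_stochastic M" and "0 < K" and pos: "\<And>i j. 0 < matpow M K $ i $ j"
    and x: "(\<Sum>i\<in>UNIV. x $ i) = 0"
  shows "summable (\<lambda>t. matpow M t *v x)"
proof -
  obtain c where c: "0 < c" "c < 1"
    and contr: "\<And>y. (\<Sum>i\<in>UNIV. y $ i) = 0 \<Longrightarrow> l1_norm (matpow M K *v y) \<le> c * l1_norm y"
    using positive_column_stochastic_contracts[OF column_stochastic_matpow[OF M] pos] by blast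
  define r where "r = root K c"
  have r: "0 < r" "r < 1"
    unfolding r_def using \<open>0 < K\<close> c by auto
  have "r ^ K = c"
    unfolding r_def using \<open>0 < K\<close> c by simp
  have rate: "c ^ (t div K) \<le> r ^ t / c" for t
  proof -
    have "t \<le> K * (t div K) + K"
      using \<open>0 < K\<close> mult_div_mod_eq[of K t] mod_less_divisor[of K t] by linarith
    then have "r ^ (K * (t div K) + K) \<le> r ^ t"
      using r by (intro power_decreasing) auto
    then show ?thesis
      using c by (simp add: \<open>r ^ K = c\<close> power_add power_mult field_simps)
  qed
  have bound: "norm (matpow M t *v x) \<le> l1_norm x / c * r ^ t" for t
  proof -
    have "norm (matpow M t *v x) \<le> l1_norm (matpow M (K * (t div K) + t mod K) *v x)"
      unfolding l1_norm_def by (simp add: norm_le_l1_cart)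
    also have "\<dots> \<le> c ^ (t div K) * l1_norm x"
      using c(1) by (intro l1_norm_matpow_geometric_decay[OF M _ contr x]) simp
    also have "\<dots> \<le> (r ^ t / c) * l1_norm x"
      by (intro mult_right_mono rate l1_norm_nonneg)
    finally show ?thesis
      by (simp add: mult.commute)
  qed
  have "summable (\<lambda>t. l1_norm x / c * r ^ t)"
    using r by (intro summable_mult summable_geometric) simp
  then show ?thesis
    by (rule summable_comparison_test') (rule bound)
qed

lemma matrix_mult_suminf_matpow_orbit:
  fixes M :: "real ^ 'n ^ 'n"
  assumes summable: "summable (\<lambda>t. matpow M t *v x)"
  shows "M *v (\<Sum>t. matpow M t *v x) = (\<Sum>t. matpow M t *v x) - x"
proof -
  have "M *v (\<Sum>t. matpow M t *v x) = (\<Sum>t. M *v (matpow M t *v x))"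
    by (rule bounded_linear.suminf[OF matrix_vector_mul_bounded_linear summable])
  also have "\<dots> = (\<Sum>t. matpow M (Suc t) *v x)"
    by (simp add: matrix_vector_mul_assoc)
  also have "\<dots> = (\<Sum>t. matpow M t *v x) - x"
    using suminf_split_head[OF summable] by simp
  finally show ?thesis .
qed

lemma matpow_nonneg:
  fixes M :: "real ^ 'n ^ 'n"
  assumes "\<And>i j. 0 \<le> M $ i $ j"
  shows "0 \<le> matpow M t $ i $ j"
  using assms
  by (induction t arbitrary: i j) (auto simp: mat_def matrix_matrix_mult_def intro: sum_nonneg)

lemma matpow_Suc_entry_ge:
  fixes M :: "real ^ 'n ^ 'n"
  assumes "\<And>i j. 0 \<le> M $ i $ j"
  shows "M $ i $ k * matpow M t $ k $ j \<le> matpow M (Suc t) $ i $ j"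
  unfolding matpow.simps matrix_matrix_mult_def vec_lambda_beta
  using assms matpow_nonneg[OF assms] by (intro member_le_sum) auto

lemma matpow_positive_entries:
  fixes M :: "real ^ 'n ^ 'n"
  assumes nonneg: "\<And>i j. 0 \<le> M $ i $ j" and diag: "\<And>i. 0 < M $ i $ i"
    and connected: "\<And>i j. (i, j) \<in> {(i, j). 0 < M $ i $ j}\<^sup>*"
  shows "\<exists>K>0. \<forall>i j. 0 < matpow M K $ i $ j"
proof -
  have reach: "\<exists>t. 0 < matpow M t $ i $ j" for i j
    using connected[of i j]
  proof (induction rule: converse_rtrancl_induct)
    case base
    show ?case
      by (rule exI[of _ 0]) (simp add: mat_def)
  next
    case (step i k)
    then obtain t where "0 < matpow M t $ k $ j" "0 < M $ i $ k"
      by auto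
    then have "0 < matpow M (Suc t) $ i $ j"
      using mult_pos_pos matpow_Suc_entry_ge[OF nonneg, of i k t j] by (meson order_less_le_trans)
    then show ?case ..
  qed
  \<comment> \<open>the positive diagonal keeps positive entries positive in all later powers\<close>
  have later: "0 < matpow M (t + s) $ i $ j" if "0 < matpow M t $ i $ j" for t s i j
  proof (induction s)
    case (Suc s)
    then have "0 < M $ i $ i * matpow M (t + s) $ i $ j"
      using diag by simp
    then show ?case
      using matpow_Suc_entry_ge[OF nonneg, of i i "t + s" j] by simp
  qed (use that in simp)
  define first where "first = (\<lambda>(i, j). LEAST t. 0 < matpow M t $ i $ j)"
  have first: "0 < matpow M (first (i, j)) $ i $ j" for i j
    unfolding first_def using reach[of i j] by (auto intro: LeastI_ex)
  define K where "K = Suc (Max (range first))"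
  have "0 < matpow M K $ i $ j" for i j
  proof -
    have "first (i, j) < K"
      unfolding K_def by (simp add: le_imp_less_Suc)
    then show ?thesis
      using later[OF first[of i j], of "K - first (i, j)"] by simp
  qed
  then show ?thesis
    unfolding K_def by blast
qed

definition vertex_degree :: "real ^ 'n ^ 'n \<Rightarrow> 'n \<Rightarrow> real" where
  "vertex_degree A i = (\<Sum>k\<in>UNIV. A $ i $ k)"

lemma degree_matrix_eq_diag: "degree_matrix A = diag_matrix (vertex_degree A)"
  unfolding degree_matrix_def diag_matrix_def vertex_degree_def ..

lemma degree_matrix_mult_ones: "degree_matrix A *v ones = A *v ones"
  by (simp add: vec_eq_iff degree_matrix_eq_diag diag_matrix_def matrix_vector_mult_def ones_def
      vertex_degree_def if_distrib if_distribR cong: if_cong)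

lemma laplacian_entry: "laplacian A $ i $ j = (if i = j then vertex_degree A i else 0) - A $ i $ j"
  by (simp add: laplacian_def degree_matrix_def vertex_degree_def)

lemma laplacian_row_sum: "(\<Sum>j\<in>UNIV. laplacian A $ i $ j) = 0"
  by (simp add: laplacian_entry sum_subtractf vertex_degree_def)

lemma laplacian_mult_entry:
  "(laplacian A *v v) $ i = (\<Sum>j\<in>UNIV. A $ i $ j * (v $ i - v $ j))"
proof -
  have "(laplacian A *v v) $ i = vertex_degree A i * v $ i - (\<Sum>j\<in>UNIV. A $ i $ j * v $ j)"
    by (simp add: laplacian_def matrix_vector_mult_diff_rdistrib degree_matrix_eq_diag
        diag_matrix_mult_vector) (simp add: matrix_vector_mult_def)
  then show ?thesis
    by (simp add: vertex_degree_def right_diff_distrib sum_subtractf sum_distrib_right)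
qed

lemma laplacian_quadratic_form:
  assumes sym: "\<And>i j. A $ i $ j = A $ j $ i"
  shows "2 * (v \<bullet> (laplacian A *v v)) = (\<Sum>i\<in>UNIV. \<Sum>j\<in>UNIV. A $ i $ j * (v $ i - v $ j)\<^sup>2)"
proof -
  define S where "S = (\<Sum>i\<in>UNIV. \<Sum>j\<in>UNIV. A $ i $ j * (v $ i * (v $ i - v $ j)))"
  define S' where "S' = (\<Sum>i\<in>UNIV. \<Sum>j\<in>UNIV. A $ i $ j * (v $ j * (v $ j - v $ i)))"
  have "v \<bullet> (laplacian A *v v) = S"
    by (simp add: S_def inner_vec_def laplacian_mult_entry sum_distrib_left algebra_simps)
  moreover have "S = S'"
    unfolding S_def S'_def by (subst sum.swap) (simp add: sym)
  ultimately have "2 * (v \<bullet> (laplacian A *v v)) = S + S'"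
    by simp
  also have "\<dots> = (\<Sum>i\<in>UNIV. \<Sum>j\<in>UNIV. A $ i $ j * (v $ i * (v $ i - v $ j) + v $ j * (v $ j - v $ i)))"
    by (simp only: S_def S'_def sum.distrib[symmetric] distrib_left[symmetric])
  also have "\<dots> = (\<Sum>i\<in>UNIV. \<Sum>j\<in>UNIV. A $ i $ j * (v $ i - v $ j)\<^sup>2)"
    by (intro sum.cong refl) (simp add: power2_eq_square algebra_simps)
  finally show ?thesis .
qed

definition averaging :: "real ^ 'n ^ 'n" where
  "averaging = (1 / real CARD('n)) *\<^sub>R (\<chi> i j. 1)"

lemma centering_eq: "centering = mat 1 - averaging"
  by (simp add: centering_def averaging_def)

lemma averaging_mult_entry: "(averaging *v (v :: real ^ 'n)) $ i = (\<Sum>j\<in>UNIV. v $ j) / real CARD('n)"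
  by (simp add: averaging_def matrix_vector_mult_def sum_divide_distrib)

lemma averaging_idem: "averaging ** averaging = averaging"
  by (simp add: vec_eq_iff averaging_def matrix_matrix_mult_def)

lemma transpose_averaging: "transpose averaging = averaging"
  by (simp add: vec_eq_iff averaging_def transpose_def)

lemma mult_averaging_eq_0:
  assumes "\<And>i. (\<Sum>j\<in>UNIV. M $ i $ j) = 0"
  shows "M ** averaging = 0"
  using assms by (simp add: vec_eq_iff averaging_def matrix_matrix_mult_def flip: sum_divide_distrib)

lemma averaging_mult_eq_0:
  assumes "\<And>j. (\<Sum>i\<in>UNIV. M $ i $ j) = 0"
  shows "averaging ** M = 0"
  using assms by (simp add: vec_eq_iff averaging_def matrix_matrix_mult_def flip: sum_divide_distrib)

locale connected_weighted_graph =
  fixes A :: "real ^ 'n ^ 'n"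
  assumes two_vertices: "2 \<le> CARD('n)"
    and weighted: "weighted_graph A"
    and connected: "graph_connected A"
begin

abbreviation "d \<equiv> vertex_degree A"
abbreviation "D \<equiv> degree_matrix A"
abbreviation "W \<equiv> lazy_walk A"
abbreviation "L \<equiv> laplacian A"

lemma symmetric: "A $ i $ j = A $ j $ i"
  and nonneg: "0 \<le> A $ i $ j"
  and no_loops: "A $ i $ i = 0"
  using weighted by (simp_all add: weighted_graph_def)

lemma vertex_degree_pos: "0 < d i"
proof -
  obtain a b :: 'n where "a \<noteq> b"
    using two_vertices card_le_Suc0_iff_eq[of "UNIV :: 'n set"] by auto
  then obtain j where "j \<noteq> i"
    by metis
  moreover have "(i, j) \<in> {(i, j). 0 < A $ i $ j}\<^sup>*"
    using connected by (simp add: graph_connected_def)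
  ultimately obtain k where "0 < A $ i $ k"
    by (auto elim: converse_rtranclE)
  also have "A $ i $ k \<le> d i"
    unfolding vertex_degree_def by (rule member_le_sum) (auto simp: nonneg)
  finally show ?thesis .
qed

lemma vertex_degree_nonzero [simp]: "d i \<noteq> 0"
  using vertex_degree_pos[of i] by simp

lemma inverse_degree_matrix: "matrix_inv D = diag_matrix (\<lambda>i. inverse (d i))"
  unfolding degree_matrix_eq_diag by (rule matrix_inv_diag_matrix) simp

lemma degree_matrix_inverse: "D ** matrix_inv D = mat 1" "matrix_inv D ** D = mat 1"
  unfolding inverse_degree_matrix
  by (simp_all add: degree_matrix_eq_diag diag_matrix_mult diag_matrix_1)

lemma lazy_walk_entry: "W $ i $ j = (if i = j then 1/2 else 0) + A $ i $ j / (2 * d j)"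
  by (simp add: lazy_walk_def inverse_degree_matrix matrix_mult_diag_matrix mat_def field_simps)

lemma lazy_walk_column_stochastic: "column_stochastic W"
proof -
  have "(\<Sum>i\<in>UNIV. W $ i $ j) = 1/2 + (\<Sum>i\<in>UNIV. A $ i $ j) / (2 * d j)" for j
    by (simp add: lazy_walk_entry sum.distrib sum_divide_distrib)
  moreover have "(\<Sum>i\<in>UNIV. A $ i $ j) = d j" for j
    by (simp add: vertex_degree_def symmetric)
  moreover have "0 \<le> W $ i $ j" for i j
    using vertex_degree_pos[of j] nonneg[of i j] by (simp add: lazy_walk_entry)
  ultimately show ?thesis
    using vertex_degree_pos by (simp add: column_stochastic_def)
qed

lemma lazy_walk_positive_power: "\<exists>K>0. \<forall>i j. 0 < matpow W K $ i $ j"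
proof (rule matpow_positive_entries)
  show "0 \<le> W $ i $ j" for i j
    using lazy_walk_column_stochastic by (simp add: column_stochastic_def)
  show "0 < W $ i $ i" for i
    using vertex_degree_pos[of i] by (simp add: lazy_walk_entry no_loops)
  have "0 < W $ i $ j" if "0 < A $ i $ j" for i j
    using that vertex_degree_pos[of j] by (cases "i = j") (simp_all add: lazy_walk_entry no_loops)
  then have "{(i, j). 0 < A $ i $ j}\<^sup>* \<subseteq> {(i, j). 0 < W $ i $ j}\<^sup>*"
    by (intro rtrancl_mono) auto
  then show "(i, j) \<in> {(i, j). 0 < W $ i $ j}\<^sup>*" for i j
    using connected by (auto simp: graph_connected_def)
qed

lemma lazy_walk_stationary: "W *v stationary A = stationary A"
proof -
  have "(A ** matrix_inv D) *v (D *v ones) = D *v ones"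
    by (simp add: matrix_vector_mul_assoc degree_matrix_inverse flip: matrix_mul_assoc)
      (simp add: degree_matrix_mult_ones)
  then have "W *v (D *v ones) = D *v ones"
    by (simp add: lazy_walk_def matrix_vector_mult_add_rdistrib
        flip: scaleR_matrix_vector_assoc scaleR_add_left)
  then show ?thesis
    by (simp add: stationary_def matrix_vector_mult_scaleR)
qed

lemma matpow_lazy_walk_stationary: "matpow W t *v stationary A = stationary A"
  by (induction t) (simp_all add: lazy_walk_stationary flip: matrix_vector_mul_assoc)

lemma stationary_sum: "(\<Sum>i\<in>UNIV. stationary A $ i) = 1"
proof -
  have "ones \<bullet> (D *v ones) = (\<Sum>i\<in>UNIV. (D *v ones) $ i)"
    by (simp add: inner_vec_def ones_def)
  also have "\<dots> > 0"
    using vertex_degree_pos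
    by (simp add: degree_matrix_eq_diag diag_matrix_mult_vector ones_def sum_pos)
  finally show ?thesis
    by (simp add: stationary_def inner_vec_def ones_def flip: sum_divide_distrib)
qed

lemma laplacian_inverse_degree: "L ** matrix_inv D = 2 *\<^sub>R (mat 1 - W)"
proof -
  have "L ** matrix_inv D = mat 1 - A ** matrix_inv D"
    by (simp add: laplacian_def matrix_diff_rdistrib degree_matrix_inverse)
  also have "\<dots> = 2 *\<^sub>R (mat 1 - W)"
    by (simp add: lazy_walk_def scaleR_diff_right scaleR_add_right scaleR_2)
  finally show ?thesis .
qed

lemma laplacian_symmetric: "L $ i $ j = L $ j $ i"
  by (simp add: laplacian_entry symmetric)

lemma laplacian_column_sum: "(\<Sum>i\<in>UNIV. L $ i $ j) = 0"
  using laplacian_row_sum[of A j] by (simp add: laplacian_symmetric[of _ j])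

lemma laplacian_kernel_constant:
  assumes "L *v v = 0"
  shows "v $ i = v $ j"
proof -
  have "(\<Sum>i\<in>UNIV. \<Sum>j\<in>UNIV. A $ i $ j * (v $ i - v $ j)\<^sup>2) = 0"
    using laplacian_quadratic_form[OF symmetric, of v] assms by simp
  then have zero: "A $ i $ j * (v $ i - v $ j)\<^sup>2 = 0" for i j
    using nonneg by (simp add: sum_nonneg_eq_0_iff sum_nonneg)
  have edge: "v $ i = v $ j" if "0 < A $ i $ j" for i j
    using that zero[of i j] by simp
  have "(i, j) \<in> {(i, j). 0 < A $ i $ j}\<^sup>*"
    using connected by (simp add: graph_connected_def)
  then show ?thesis
    by (induction rule: rtrancl_induct) (auto dest: edge)
qed

lemma laplacian_plus_averaging_injective:
  assumes "(L + averaging) *v v = 0"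
  shows "v = 0"
proof -
  have "(\<Sum>i\<in>UNIV. (L *v v) $ i) = 0"
  proof -
    have "(\<Sum>i\<in>UNIV. (L *v v) $ i) = (\<Sum>j\<in>UNIV. (\<Sum>i\<in>UNIV. L $ i $ j) * v $ j)"
      by (simp add: matrix_vector_mult_def sum_distrib_right) (rule sum.swap)
    then show ?thesis
      by (simp add: laplacian_column_sum)
  qed
  moreover have "(\<Sum>i\<in>UNIV. (L *v v) $ i) + (\<Sum>i\<in>UNIV. (averaging *v v) $ i) = 0"
    using arg_cong[OF assms, of "\<lambda>w. \<Sum>i\<in>UNIV. w $ i"]
    by (simp add: matrix_vector_mult_add_rdistrib sum.distrib)
  ultimately have sum_zero: "(\<Sum>j\<in>UNIV. v $ j) = 0"
    by (simp add: averaging_mult_entry)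
  then have "L *v v = 0"
    using assms by (simp add: vec_eq_iff averaging_mult_entry matrix_vector_mult_add_rdistrib)
  then have const: "v $ j = v $ i" for i j
    by (rule laplacian_kernel_constant)
  have "(\<Sum>j\<in>UNIV. v $ j) = (\<Sum>j\<in>(UNIV :: 'n set). v $ i)" for i
    using const by (intro sum.cong) auto
  then show ?thesis
    using sum_zero by (simp add: vec_eq_iff)
qed

lemma pinv_laplacian_mult: "pinv L ** L = centering"
  unfolding centering_eq
proof (rule pinv_mult_eq_complementary_projection)
  show "L ** averaging = 0"
    by (rule mult_averaging_eq_0) (rule laplacian_row_sum)
  show "averaging ** L = 0"
    by (rule averaging_mult_eq_0) (rule laplacian_column_sum)
qed (use averaging_idem transpose_averaging laplacian_plus_averaging_injective in auto)

end

theorem lemma3p3: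
  fixes A :: "real ^ 'n ^ 'n" and u :: 'n
  assumes "CARD('n) \<ge> 2"
    and "weighted_graph A"
    and "graph_connected A"
  shows "summable (\<lambda>t. matpow (lazy_walk A) t *v indic u - stationary A)
    \<and> pinv (laplacian A) *v (indic u - stationary A)
      = (1/2) *\<^sub>R ((centering ** matrix_inv (degree_matrix A))
           *v (\<Sum>t. matpow (lazy_walk A) t *v indic u - stationary A))"
proof -
  interpret connected_weighted_graph A
    using assms by unfold_locales
  define x where "x = indic u - stationary A"
  have orbit: "matpow W t *v indic u - stationary A = matpow W t *v x" for t
    by (simp add: x_def matrix_vector_mult_diff_distrib matpow_lazy_walk_stationary)
  have "(\<Sum>i\<in>UNIV. x $ i) = 0"
    by (simp add: x_def sum_subtractf stationary_sum indic_def)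
  then have summable: "summable (\<lambda>t. matpow W t *v x)"
    using summable_matpow_orbit[OF lazy_walk_column_stochastic] lazy_walk_positive_power by blast
  define S where "S = (\<Sum>t. matpow W t *v x)"
  define y where "y = (1/2) *\<^sub>R (matrix_inv D *v S)"
  have "L *v y = (1/2) *\<^sub>R ((L ** matrix_inv D) *v S)"
    by (simp add: y_def matrix_vector_mult_scaleR matrix_vector_mul_assoc)
  also have "\<dots> = x"
    using matrix_mult_suminf_matpow_orbit[OF summable]
    by (simp add: S_def laplacian_inverse_degree matrix_vector_mult_diff_rdistrib
        flip: scaleR_matrix_vector_assoc)
  finally have "pinv L *v x = centering *v y"
    by (metis pinv_laplacian_mult matrix_vector_mul_assoc)
  then show ?thesis
    using summable
    by (simp add: orbit S_def x_def y_def matrix_vector_mult_scaleR matrix_vector_mul_assoc)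
qed

end
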